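(* Let $K\in\{\mathbb R,\mathbb C,\mathbb H\}$ and let $(E,d)$ be a metric vector space over $K$ such that $d$ is $C_0$-translation invariant and $(C_1,C_2,C_3)$-lipschitz multiplicative. Let $d_0(x,y)=\int_{\mathbb U}d(ux,uy)\,d\mu(u)$, $\delta(x,y)=\lim_{n\to\infty}\frac1n d(nx,ny)$ and $\delta_0(x,y)=\lim_{n\to\infty}\frac1n d_0(nx,ny)$. Then $\delta$ and $\delta_0$ are symmetric and satisfy the triangle inequality, and for all $\lambda\in K$ and $x,y\in E$, $\delta_0(\lambda x,\lambda y)=|\lambda|\,\delta_0(x,y)$.
   Context: A metric vector space is a topological vector space over $K$ whose topology is generated by the metric $d$. $\mathbb U=\{u\in K:|u|=1\}$, $\mu$ the right-invariant Haar probability measure on $\mathbb U$. $d$ is $C_0$-translation invariant if $d(x+z,y+z)\le d(x,y)+C_0$ for all $x,y,z$. $(C_1,C_2,C_3)$-lipschitz multiplicative ($C_1\ge1$, $C_2,C_3\ge0$) means $C_1^{-1}|\lambda|d(x,y)-C_2|\lambda|-C_3\le d(\lambda x,\lambda y)\le C_1|\lambda|d(x,y)+C_2|\lambda|+C_3$ for all $\lambda\in K$, $x,y\in E$. (Under these hypotheses the limits defining $\delta,\delta_0$ exist.) *)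

theory Defs
  imports "HOL-Analysis.Analysis" "HOL-Probability.Probability"
begin

text \<open>The scalar field K is modelled as a type of class real_normed_div_algebra
  (an associative unital real algebra with multiplicative norm); up to isometric
  isomorphism these are exactly R, C and H.  |lambda| is norm lambda.\<close>

definition K_module :: "('k::real_normed_div_algebra \<Rightarrow> 'e::ab_group_add \<Rightarrow> 'e) \<Rightarrow> bool" where
  "K_module scal \<longleftrightarrow>
     (\<forall>a x y. scal a (x + y) = scal a x + scal a y) \<and>
     (\<forall>a b x. scal (a + b) x = scal a x + scal b x) \<and>
     (\<forall>a b x. scal (a * b) x = scal a (scal b x)) \<and>
     (\<forall>x. scal 1 x = x)"

definition metric_vector_space ::
  "('k::real_normed_div_algebra \<Rightarrow> 'e::ab_group_add \<Rightarrow> 'e) \<Rightarrow> ('e \<Rightarrow> 'e \<Rightarrow> real) \<Rightarrow> bool" where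
  "metric_vector_space scal d \<longleftrightarrow>
     K_module scal \<and> Metric_space UNIV d \<and>
     (\<forall>x y. \<forall>e>0. \<exists>r>0. \<forall>x' y'. d x x' < r \<and> d y y' < r \<longrightarrow> d (x + y) (x' + y') < e) \<and>
     (\<forall>a x. \<forall>e>0. \<exists>r>0. \<forall>b x'. norm (a - b) < r \<and> d x x' < r \<longrightarrow> d (scal a x) (scal b x') < e)"

definition translation_invariant_C :: "real \<Rightarrow> ('e::ab_group_add \<Rightarrow> 'e \<Rightarrow> real) \<Rightarrow> bool" where
  "translation_invariant_C C0 d \<longleftrightarrow> (\<forall>x y z. d (x + z) (y + z) \<le> d x y + C0)"

definition lipschitz_multiplicative ::
  "real \<Rightarrow> real \<Rightarrow> real \<Rightarrow> ('k::real_normed_div_algebra \<Rightarrow> 'e \<Rightarrow> 'e) \<Rightarrow> ('e \<Rightarrow> 'e \<Rightarrow> real) \<Rightarrow> bool" where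
  "lipschitz_multiplicative C1 C2 C3 scal d \<longleftrightarrow>
     C1 \<ge> 1 \<and> C2 \<ge> 0 \<and> C3 \<ge> 0 \<and>
     (\<forall>c x y.
        norm c * d x y / C1 - C2 * norm c - C3 \<le> d (scal c x) (scal c y) \<and>
        d (scal c x) (scal c y) \<le> C1 * norm c * d x y + C2 * norm c + C3)"

definition unit_group :: "'k::real_normed_div_algebra set" where
  "unit_group = {u. norm u = 1}"

definition haar_prob_U :: "'k::real_normed_div_algebra measure \<Rightarrow> bool" where
  "haar_prob_U M \<longleftrightarrow>
     prob_space M \<and> space M = unit_group \<and> sets M = sets (restrict_space borel unit_group) \<and>
     (\<forall>v\<in>unit_group. \<forall>A\<in>sets M. emeasure M {u\<in>unit_group. u * v \<in> A} = emeasure M A)"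

definition d0 :: "'k::real_normed_div_algebra measure \<Rightarrow> ('k \<Rightarrow> 'e \<Rightarrow> 'e) \<Rightarrow> ('e \<Rightarrow> 'e \<Rightarrow> real) \<Rightarrow> 'e \<Rightarrow> 'e \<Rightarrow> real" where
  "d0 M scal d x y = (\<integral>u. d (scal u x) (scal u y) \<partial>M)"

definition asym :: "('k::real_normed_div_algebra \<Rightarrow> 'e \<Rightarrow> 'e) \<Rightarrow> ('e \<Rightarrow> 'e \<Rightarrow> real) \<Rightarrow> 'e \<Rightarrow> 'e \<Rightarrow> real" where
  "asym scal d x y = lim (\<lambda>n. d (scal (of_nat n) x) (scal (of_nat n) y) / real n)"

end

(*
  For any D that is nonnegative, satisfies the triangle inequality, is C0-translation
  invariant and is bounded on each segment {s z | 0 <= s <= 1}, the function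
  G t = D (t z) 0 + C0 is subadditive on [0, oo), so by Fekete's lemma G t / t converges
  as the REAL parameter t tends to infinity.  For z = x - y, D (t x) (t y) differs from G t
  by at most 2 C0, hence D (t x) (t y) / t converges to asym D x y; symmetry and the
  triangle inequality pass to the limit.  Both d and its average d0 over the unit sphere
  satisfy these hypotheses.

  For homogeneity write c = r u with r = |c| and |u| = 1.  Right invariance of the Haar
  measure makes d0 invariant under u, so d0 (t c x) (t c y) / t = r * d0 (t r x) (t r y) / (t r),
  which tends to r * asym d0 x y; this is why the limit is taken along real t, not along n.
*)

theory Submission
  imports Defs
begin

section \<open>Fekete's lemma for a real parameter\<close>

definition nonneg_subadditive :: "(real \<Rightarrow> real) \<Rightarrow> bool" where
  "nonneg_subadditive G \<longleftrightarrow> (\<forall>a b. 0 \<le> a \<longrightarrow> 0 \<le> b \<longrightarrow> G (a + b) \<le> G a + G b)"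

lemma nonneg_subadditiveD: "nonneg_subadditive G \<Longrightarrow> 0 \<le> a \<Longrightarrow> 0 \<le> b \<Longrightarrow> G (a + b) \<le> G a + G b"
  unfolding nonneg_subadditive_def by blast

lemma subadditive_le_mult:
  fixes G :: "real \<Rightarrow> real"
  assumes sub: "nonneg_subadditive G"
    and "0 \<le> s" and "1 \<le> n"
  shows "G (real n * s) \<le> real n * G s"
  using \<open>1 \<le> n\<close>
proof (induction n rule: nat_induct_at_least)
  case base
  then show ?case by simp
next
  case (Suc n)
  have "G (real (Suc n) * s) = G (real n * s + s)"
    by (simp add: algebra_simps)
  also have "\<dots> \<le> G (real n * s) + G s"
    using nonneg_subadditiveD[OF sub] \<open>0 \<le> s\<close> by simp
  also have "\<dots> \<le> real (Suc n) * G s"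
    using Suc.IH by (simp add: algebra_simps)
  finally show ?case .
qed

lemma subadditive_bounded_on_interval:
  fixes G :: "real \<Rightarrow> real"
  assumes sub: "nonneg_subadditive G"
    and bounded: "\<And>t. 0 \<le> t \<Longrightarrow> t \<le> 1 \<Longrightarrow> G t \<le> B"
    and "0 \<le> r" "r \<le> real k" "1 \<le> k"
  shows "G r \<le> real k * B"
proof -
  have "G r = G (real k * (r / real k))"
    using \<open>1 \<le> k\<close> by simp
  also have "\<dots> \<le> real k * G (r / real k)"
    using assms by (intro subadditive_le_mult[OF sub]) auto
  also have "\<dots> \<le> real k * B"
    using assms by (intro mult_left_mono bounded) auto
  finally show ?thesis .
qed

lemma subadditive_quotient_le:
  fixes G :: "real \<Rightarrow> real"
  assumes sub: "nonneg_subadditive G"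
    and bounded: "\<And>r. 0 \<le> r \<Longrightarrow> r \<le> m \<Longrightarrow> G r \<le> A"
    and "0 \<le> G m" "0 < m" "m \<le> t"
  shows "G t / t \<le> G m / m + A / t"
proof -
  define q where "q = nat \<lfloor>t / m\<rfloor>"
  define r where "r = t - real q * m"
  have "1 \<le> t / m"
    using assms by simp
  then have q: "1 \<le> q" "real q \<le> t / m" "t / m < real q + 1"
    unfolding q_def by linarith+
  then have r: "0 \<le> r" "r \<le> m"
    using \<open>0 < m\<close> unfolding r_def by (simp_all add: field_simps)
  have "G t = G (real q * m + r)"
    unfolding r_def by simp
  also have "\<dots> \<le> G (real q * m) + G r"
    using nonneg_subadditiveD[OF sub] r \<open>0 < m\<close> by simp
  also have "\<dots> \<le> real q * G m + A"
    using subadditive_le_mult[OF sub _ q(1), of m] bounded[OF r] \<open>0 < m\<close> by simp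
  also have "\<dots> \<le> t / m * G m + A"
    using mult_right_mono[OF q(2) \<open>0 \<le> G m\<close>] by simp
  finally show ?thesis
    using assms by (simp add: field_simps)
qed

lemma subadditive_tendsto_Inf:
  fixes G :: "real \<Rightarrow> real"
  assumes sub: "nonneg_subadditive G"
    and nonneg: "\<And>t. 0 \<le> t \<Longrightarrow> 0 \<le> G t"
    and bounded: "\<And>t. 0 \<le> t \<Longrightarrow> t \<le> 1 \<Longrightarrow> G t \<le> B"
  shows "((\<lambda>t. G t / t) \<longlongrightarrow> (INF t\<in>{1..}. G t / t)) at_top"
proof (rule tendstoI)
  fix e :: real
  assume "0 < e"
  define L where "L = (INF t\<in>{1..}. G t / t)"
  have bdd: "bdd_below ((\<lambda>t. G t / t) ` {1..})"
    using nonneg by (intro bdd_belowI2[of _ 0]) simp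
  then have lower: "L \<le> G t / t" if "1 \<le> t" for t
    unfolding L_def using that by (intro cINF_lower) auto
  obtain m where m: "1 \<le> m" "G m / m < L + e / 2"
    using cINF_less_iff[OF _ bdd, of "L + e / 2"] \<open>0 < e\<close> unfolding L_def by auto
  define k where "k = nat \<lceil>m\<rceil>"
  have k: "1 \<le> k" "m \<le> real k"
    using m unfolding k_def by linarith+
  have "\<forall>\<^sub>F t in at_top. m \<le> t \<and> 2 * (real k * B) / e < t"
    by (intro eventually_conj eventually_ge_at_top eventually_gt_at_top)
  then show "\<forall>\<^sub>F t in at_top. dist (G t / t) (INF t\<in>{1..}. G t / t) < e"
  proof eventually_elim
    case (elim t)
    have "G t / t \<le> G m / m + real k * B / t"
      using elim m k nonneg
      by (intro subadditive_quotient_le[OF sub] subadditive_bounded_on_interval[OF sub bounded]) auto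
    moreover have "real k * B / t < e / 2"
      using elim m \<open>0 < e\<close> by (simp add: field_simps)
    moreover have "L \<le> G t / t"
      using elim m by (intro lower) simp
    ultimately show ?case
      using m unfolding L_def[symmetric] dist_real_def by linarith
  qed
qed

section \<open>The asymptotic metric\<close>

context
  fixes scal :: "'k::real_normed_div_algebra \<Rightarrow> 'e::ab_group_add \<Rightarrow> 'e"
  assumes module: "K_module scal"
begin

lemma scal_add_right: "scal a (x + y) = scal a x + scal a y"
  using module unfolding K_module_def by blast

lemma scal_add_left: "scal (a + b) x = scal a x + scal b x"
  using module unfolding K_module_def by blast

lemma scal_scal: "scal a (scal b x) = scal (a * b) x"
  using module unfolding K_module_def by simp

lemma scal_zero_right [simp]: "scal a 0 = 0"
  using scal_add_right[of a 0 0] by simp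

lemma scal_zero_left [simp]: "scal 0 x = 0"
  using scal_add_left[of 0 0 x] by simp

lemma scal_diff_right: "scal a (x - y) = scal a x - scal a y"
  using scal_add_right[of a "x - y" y] by (simp add: eq_diff_eq)

end

lemma of_real_mult_commute: "of_real r * x = x * (of_real r :: 'a::real_normed_algebra_1)"
  by (simp add: of_real_def)

lemma unit_factor:
  fixes c :: "'k::real_normed_div_algebra"
  assumes "c \<noteq> 0"
  obtains u where "u \<in> unit_group" and "\<And>t. of_real t * c = u * of_real (t * norm c)"
proof
  define r where "r = norm c"
  have "0 < r"
    using assms unfolding r_def by simp
  show "of_real (1 / r) * c \<in> unit_group"
    using \<open>0 < r\<close> unfolding r_def unit_group_def by (simp add: norm_mult del: of_real_divide)
  fix t
  have "of_real (1 / r) * c * of_real (t * r) = of_real (1 / r) * (of_real (t * r) * c)"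
    by (simp only: mult.assoc of_real_mult_commute[of "t * r" c])
  also have "\<dots> = of_real (1 / r * (t * r)) * c"
    by (simp only: of_real_mult mult.assoc)
  finally show "of_real t * c = of_real (1 / r) * c * of_real (t * norm c)"
    using \<open>0 < r\<close> unfolding r_def by simp
qed

lemma translation_invariant_C_diff_le:
  fixes D :: "'e::ab_group_add \<Rightarrow> 'e \<Rightarrow> real"
  assumes "translation_invariant_C C0 D"
  shows "D x y \<le> D (x - y) 0 + C0" and "D (x - y) 0 \<le> D x y + C0"
proof -
  have shift: "D (x + z) (y + z) \<le> D x y + C0" for x y z
    using assms unfolding translation_invariant_C_def by blast
  show "D x y \<le> D (x - y) 0 + C0"
    using shift[where x = "x - y" and y = 0 and z = y] by simp
  show "D (x - y) 0 \<le> D x y + C0"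
    using shift[where x = x and y = y and z = "- y"] by simp
qed

lemma translation_invariant_C_nonneg:
  assumes "translation_invariant_C C0 D"
  shows "0 \<le> C0"
  using assms[unfolded translation_invariant_C_def, rule_format, of 0 0 0] by simp

lemma tendsto_quotient_bounded_diff:
  fixes f g :: "real \<Rightarrow> real"
  assumes "((\<lambda>t. g t / t) \<longlongrightarrow> L) at_top" and "\<And>t. \<bar>f t - g t\<bar> \<le> C"
  shows "((\<lambda>t. f t / t) \<longlongrightarrow> L) at_top"
proof (rule tendsto_sandwich)
  have "((\<lambda>t. C / t) \<longlongrightarrow> 0) at_top"
    by (intro tendsto_divide_0[OF tendsto_const] filterlim_at_top_imp_at_infinity filterlim_ident)
  from tendsto_diff[OF assms(1) this] tendsto_add[OF assms(1) this]
  show "((\<lambda>t. g t / t - C / t) \<longlongrightarrow> L) at_top" "((\<lambda>t. g t / t + C / t) \<longlongrightarrow> L) at_top"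
    by simp_all
  have lower: "g t - C \<le> f t" and upper: "f t \<le> g t + C" for t
    using assms(2)[of t] by (simp_all add: abs_le_iff)
  show "\<forall>\<^sub>F t in at_top. g t / t - C / t \<le> f t / t"
    using eventually_gt_at_top[of "0::real"]
    by eventually_elim (simp add: diff_divide_distrib[symmetric] divide_right_mono lower)
  show "\<forall>\<^sub>F t in at_top. f t / t \<le> g t / t + C / t"
    using eventually_gt_at_top[of "0::real"]
    by eventually_elim (simp add: add_divide_distrib[symmetric] divide_right_mono upper)
qed

lemma asym_eqI:
  assumes "((\<lambda>t. D (scal (of_real t) x) (scal (of_real t) y) / t) \<longlongrightarrow> L) at_top"
  shows "asym scal D x y = L"
  using filterlim_compose[OF assms filterlim_real_sequentially]
  unfolding asym_def by (simp add: o_def limI)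

lemma nonneg_subadditive_dist_scal:
  fixes D :: "'e::ab_group_add \<Rightarrow> 'e \<Rightarrow> real"
  assumes module: "K_module scal"
    and triangle: "\<And>x y z. D x z \<le> D x y + D y z"
    and transl: "translation_invariant_C C0 D"
  shows "nonneg_subadditive (\<lambda>t. D (scal (of_real t) z) 0 + C0)"
  unfolding nonneg_subadditive_def
proof (intro allI impI)
  fix a b :: real
  let ?a = "scal (of_real a) z" and ?b = "scal (of_real b) z"
  have "D (?a + ?b) 0 \<le> D (?a + ?b) ?b + D ?b 0"
    by (rule triangle)
  also have "D (?a + ?b) ?b \<le> D ?a 0 + C0"
    using translation_invariant_C_diff_le(1)[OF transl, of "?a + ?b" ?b] by simp
  finally show "D (scal (of_real (a + b)) z) 0 + C0 \<le> D ?a 0 + C0 + (D ?b 0 + C0)"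
    by (simp add: scal_add_left[OF module])
qed

lemma asym_tendsto:
  fixes D :: "'e::ab_group_add \<Rightarrow> 'e \<Rightarrow> real"
  assumes module: "K_module scal"
    and nonneg: "\<And>x y. 0 \<le> D x y"
    and triangle: "\<And>x y z. D x z \<le> D x y + D y z"
    and transl: "translation_invariant_C C0 D"
    and bounded: "\<And>z. \<exists>B. \<forall>s\<in>{0..1}. D (scal (of_real s) z) 0 \<le> B"
  shows "((\<lambda>t. D (scal (of_real t) x) (scal (of_real t) y) / t) \<longlongrightarrow> asym scal D x y) at_top"
proof -
  define G where "G t = D (scal (of_real t) (x - y)) 0 + C0" for t
  have "0 \<le> C0"
    by (rule translation_invariant_C_nonneg[OF transl])
  obtain B where B: "\<And>s. s \<in> {0..1} \<Longrightarrow> D (scal (of_real s) (x - y)) 0 \<le> B"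
    using bounded by blast
  have "((\<lambda>t. G t / t) \<longlongrightarrow> (INF t\<in>{1..}. G t / t)) at_top"
  proof (rule subadditive_tendsto_Inf)
    show "nonneg_subadditive G"
      unfolding G_def by (rule nonneg_subadditive_dist_scal[OF module triangle transl])
    show "0 \<le> G t" for t
      unfolding G_def using nonneg \<open>0 \<le> C0\<close> by (rule add_nonneg_nonneg)
    show "G t \<le> B + C0" if "0 \<le> t" "t \<le> 1" for t
      unfolding G_def using B that by simp
  qed
  moreover have "\<bar>D (scal (of_real t) x) (scal (of_real t) y) - G t\<bar> \<le> 2 * C0" for t
    using translation_invariant_C_diff_le[OF transl, of "scal (of_real t) x" "scal (of_real t) y"]
    unfolding G_def scal_diff_right[OF module] by (simp add: abs_le_iff)
  ultimately have lim: "((\<lambda>t. D (scal (of_real t) x) (scal (of_real t) y) / t) \<longlongrightarrow> (INF t\<in>{1..}. G t / t)) at_top"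
    by (rule tendsto_quotient_bounded_diff)
  moreover from lim have "asym scal D x y = (INF t\<in>{1..}. G t / t)"
    by (rule asym_eqI)
  ultimately show ?thesis
    by simp
qed

lemma asym_commute:
  assumes "\<And>x y. D x y = D y x"
  shows "asym scal D x y = asym scal D y x"
  unfolding asym_def by (simp add: assms)

lemma asym_triangle:
  assumes triangle: "\<And>x y z. D x z \<le> D x y + D y z"
    and lim: "\<And>x y. ((\<lambda>t. D (scal (of_real t) x) (scal (of_real t) y) / t) \<longlongrightarrow> asym scal D x y) at_top"
  shows "asym scal D x z \<le> asym scal D x y + asym scal D y z"
proof (rule tendsto_le[OF trivial_limit_at_top_linorder tendsto_add[OF lim lim] lim])
  show "\<forall>\<^sub>F t in at_top. D (scal (of_real t) x) (scal (of_real t) z) / t \<le>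
      D (scal (of_real t) x) (scal (of_real t) y) / t + D (scal (of_real t) y) (scal (of_real t) z) / t"
    using eventually_gt_at_top[of 0]
    by eventually_elim (simp add: add_divide_distrib[symmetric] divide_right_mono triangle)
qed

lemma asym_scal:
  assumes module: "K_module scal"
    and unit_invariant: "\<And>u x y. u \<in> unit_group \<Longrightarrow> D (scal u x) (scal u y) = D x y"
    and lim: "\<And>x y. ((\<lambda>t. D (scal (of_real t) x) (scal (of_real t) y) / t) \<longlongrightarrow> asym scal D x y) at_top"
  shows "asym scal D (scal c x) (scal c y) = norm c * asym scal D x y"
proof (cases "c = 0")
  case True
  have "((\<lambda>t. D 0 0 / t) \<longlongrightarrow> 0) at_top"
    by (intro tendsto_divide_0[OF tendsto_const] filterlim_at_top_imp_at_infinity filterlim_ident)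
  then show ?thesis
    using True by (intro asym_eqI) (simp add: module)
next
  case False
  define r where "r = norm c"
  have "0 < r"
    using False unfolding r_def by simp
  obtain u where "u \<in> unit_group" and factor: "\<And>t. of_real t * c = u * of_real (t * r)"
    using unit_factor[OF False] unfolding r_def by blast
  have rescale: "D (scal (of_real t) (scal c x)) (scal (of_real t) (scal c y)) / t =
      r * (D (scal (of_real (t * r)) x) (scal (of_real (t * r)) y) / (t * r))" for t
  proof -
    have "D (scal (of_real t) (scal c x)) (scal (of_real t) (scal c y)) =
        D (scal u (scal (of_real (t * r)) x)) (scal u (scal (of_real (t * r)) y))"
      by (simp only: scal_scal[OF module] factor)
    then show ?thesis
      using \<open>0 < r\<close> \<open>u \<in> unit_group\<close> by (simp add: unit_invariant)
  qed
  have "filterlim (\<lambda>t. t * r) at_top at_top"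
    by (intro filterlim_at_top_mult_tendsto_pos[OF tendsto_const \<open>0 < r\<close> filterlim_ident])
  from tendsto_mult_left[OF filterlim_compose[OF lim this], of r]
  show ?thesis
    unfolding r_def by (intro asym_eqI) (simp add: rescale r_def o_def)
qed

section \<open>Haar measure on the unit sphere\<close>

context
  fixes M :: "'k::real_normed_div_algebra measure"
  assumes haar: "haar_prob_U M"
begin

lemma haar_space: "space M = unit_group"
  and haar_sets: "sets M = sets (restrict_space borel unit_group)"
  and haar_right_invariant:
    "v \<in> unit_group \<Longrightarrow> A \<in> sets M \<Longrightarrow> emeasure M {u \<in> unit_group. u * v \<in> A} = emeasure M A"
  using haar unfolding haar_prob_U_def by blast+

lemma haar_measurable_mult_right:
  assumes "v \<in> unit_group"
  shows "(\<lambda>u. u * v) \<in> M \<rightarrow>\<^sub>M M"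
  unfolding measurable_cong_sets[OF haar_sets haar_sets] using assms
  by (intro measurable_restrict_space1 measurable_restrict_space2 borel_measurable_continuous_onI)
     (auto simp: unit_group_def norm_mult continuous_on_mult_right)

lemma haar_borel_measurable: "continuous_on unit_group f \<Longrightarrow> f \<in> borel_measurable M"
  using measurable_restrict_space1 borel_measurable_continuous_on_restrict
  unfolding measurable_cong_sets[OF haar_sets refl] by blast

lemma haar_distr_mult_right:
  assumes "v \<in> unit_group"
  shows "distr M M (\<lambda>u. u * v) = M"
proof (rule measure_eqI)
  fix A
  assume "A \<in> sets (distr M M (\<lambda>u. u * v))"
  then have "A \<in> sets M"
    by simp
  moreover have "(\<lambda>u. u * v) -` A \<inter> space M = {u \<in> unit_group. u * v \<in> A}"
    by (auto simp: haar_space)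
  ultimately show "emeasure (distr M M (\<lambda>u. u * v)) A = emeasure M A"
    by (simp add: emeasure_distr haar_measurable_mult_right haar_right_invariant assms)
qed simp

lemma haar_integral_mult_right:
  fixes f :: "'k \<Rightarrow> real"
  assumes "v \<in> unit_group" and "f \<in> borel_measurable M"
  shows "(\<integral>u. f (u * v) \<partial>M) = integral\<^sup>L M f"
  using integral_distr[OF haar_measurable_mult_right assms(2)] haar_distr_mult_right assms(1)
  by metis

end

section \<open>The metric and its average over the unit sphere\<close>

locale lipschitz_metric_vector_space =
  fixes scal :: "'k::real_normed_div_algebra \<Rightarrow> 'e::ab_group_add \<Rightarrow> 'e"
    and d :: "'e \<Rightarrow> 'e \<Rightarrow> real"
    and C0 C1 C2 C3 :: real
  assumes metric_vector_space: "metric_vector_space scal d"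
    and translation_invariant: "translation_invariant_C C0 d"
    and lipschitz: "lipschitz_multiplicative C1 C2 C3 scal d"
begin

lemma module: "K_module scal"
  using metric_vector_space unfolding metric_vector_space_def by blast

sublocale Metric_space UNIV d
  using metric_vector_space unfolding metric_vector_space_def by blast

lemma scal_continuous:
  assumes "0 < e"
  shows "\<exists>r>0. \<forall>b. norm (a - b) < r \<longrightarrow> d (scal a x) (scal b x) < e"
proof -
  obtain r where "0 < r" and r: "\<And>b x'. norm (a - b) < r \<and> d x x' < r \<Longrightarrow> d (scal a x) (scal b x') < e"
    using metric_vector_space assms unfolding metric_vector_space_def by meson
  moreover have "d x x = 0"
    by (simp add: zero)
  ultimately show ?thesis
    by (metis r)
qed

lemma dist_scal_le:
  assumes "norm c \<le> 1"
  shows "d (scal c x) (scal c y) \<le> C1 * d x y + C2 + C3"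
proof -
  have "1 \<le> C1" "0 \<le> C2" and
    upper: "d (scal c x) (scal c y) \<le> C1 * norm c * d x y + C2 * norm c + C3"
    using lipschitz unfolding lipschitz_multiplicative_def by blast+
  moreover have "C1 * norm c * d x y \<le> C1 * d x y" "C2 * norm c \<le> C2"
    using assms \<open>1 \<le> C1\<close> \<open>0 \<le> C2\<close>
    by (simp_all add: mult_left_le mult_left_le_one_le mult.assoc)
  ultimately show ?thesis
    by linarith
qed

lemma d_triangle: "d x z \<le> d x y + d y z"
  by (rule triangle) auto

lemma scal_of_real_bounded: "\<exists>B. \<forall>s\<in>{0..1}. d (scal (of_real s) z) 0 \<le> B"
  using dist_scal_le[of "of_real s" z 0 for s] by (intro exI[of _ "C1 * d z 0 + C2 + C3"]) (simp add: module)

lemma asym_d_tendsto: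
  "((\<lambda>t. d (scal (of_real t) x) (scal (of_real t) y) / t) \<longlongrightarrow> asym scal d x y) at_top"
  by (rule asym_tendsto[OF module nonneg d_triangle translation_invariant scal_of_real_bounded])

lemma asym_d_commute: "asym scal d x y = asym scal d y x"
  by (rule asym_commute) (rule commute)

lemma asym_d_triangle: "asym scal d x z \<le> asym scal d x y + asym scal d y z"
  by (rule asym_triangle) (rule d_triangle, rule asym_d_tendsto)

text \<open>The carrier has no topology of its own; continuity of \<open>\<lambda>u. scal u z\<close> refers to
  the metric topology of \<open>d\<close>.\<close>

lemma continuous_on_dist_scal: "continuous_on UNIV (\<lambda>u. d (scal u x) (scal u y))"
proof -
  have "continuous_map euclidean (mtopology_of (metric (UNIV, d))) (\<lambda>u. scal u z)" for z
    unfolding mtopology_of mtopology_is_euclidean[symmetric] Met_TC.metric_continuous_map[OF Metric_space_axioms]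
    using scal_continuous by (auto simp: dist_norm)
  then have "continuous_map euclidean euclidean (\<lambda>u. mdist (metric (UNIV, d)) (scal u x) (scal u y))"
    by (intro continuous_map_mdist)
  then show ?thesis
    by simp
qed

end

locale haar_averaged_metric = lipschitz_metric_vector_space scal d C0 C1 C2 C3
  for scal :: "'k::real_normed_div_algebra \<Rightarrow> 'e::ab_group_add \<Rightarrow> 'e" and d C0 C1 C2 C3 +
  fixes M :: "'k measure"
  assumes haar: "haar_prob_U M"
begin

sublocale prob_space M
  using haar unfolding haar_prob_U_def by blast

lemma borel_measurable_dist_scal: "(\<lambda>u. d (scal u x) (scal u y)) \<in> borel_measurable M"
  by (rule haar_borel_measurable[OF haar continuous_on_subset[OF continuous_on_dist_scal]]) simp

lemma integrable_dist_scal: "integrable M (\<lambda>u. d (scal u x) (scal u y))"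
proof (rule integrable_const_bound[where B = "C1 * d x y + C2 + C3"])
  show "AE u in M. norm (d (scal u x) (scal u y)) \<le> C1 * d x y + C2 + C3"
    using dist_scal_le by (auto simp: haar_space[OF haar] unit_group_def)
qed (rule borel_measurable_dist_scal)

lemma d0_nonneg: "0 \<le> d0 M scal d x y"
  unfolding d0_def by simp

lemma d0_commute: "d0 M scal d x y = d0 M scal d y x"
  unfolding d0_def by (simp add: commute)

lemma d0_triangle: "d0 M scal d x z \<le> d0 M scal d x y + d0 M scal d y z"
proof -
  have "d0 M scal d x z \<le> (\<integral>u. d (scal u x) (scal u y) + d (scal u y) (scal u z) \<partial>M)"
    unfolding d0_def by (intro integral_mono Bochner_Integration.integrable_add integrable_dist_scal d_triangle)
  also have "\<dots> = d0 M scal d x y + d0 M scal d y z"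
    unfolding d0_def by (intro Bochner_Integration.integral_add integrable_dist_scal)
  finally show ?thesis .
qed

lemma d0_translation_invariant: "translation_invariant_C C0 (d0 M scal d)"
  unfolding translation_invariant_C_def
proof (intro allI)
  fix x y z
  have "d0 M scal d (x + z) (y + z) \<le> (\<integral>u. d (scal u x) (scal u y) + C0 \<partial>M)"
    unfolding d0_def using translation_invariant
    by (intro integral_mono Bochner_Integration.integrable_add integrable_dist_scal)
      (auto simp: scal_add_right[OF module] translation_invariant_C_def)
  also have "\<dots> = d0 M scal d x y + C0"
    unfolding d0_def by (simp add: integrable_dist_scal prob_space)
  finally show "d0 M scal d (x + z) (y + z) \<le> d0 M scal d x y + C0" .
qed

lemma d0_scal_le:
  assumes "norm c \<le> 1"
  shows "d0 M scal d (scal c x) (scal c y) \<le> C1 * d x y + C2 + C3"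
proof -
  have "d (scal u (scal c x)) (scal u (scal c y)) \<le> C1 * d x y + C2 + C3" if "u \<in> space M" for u
    using that assms unfolding scal_scal[OF module]
    by (intro dist_scal_le) (simp add: haar_space[OF haar] unit_group_def norm_mult)
  then have "d0 M scal d (scal c x) (scal c y) \<le> (\<integral>u. C1 * d x y + C2 + C3 \<partial>M)"
    unfolding d0_def by (intro integral_mono integrable_dist_scal) simp_all
  then show ?thesis
    by (simp add: prob_space)
qed

lemma d0_scal_of_real_bounded: "\<exists>B. \<forall>s\<in>{0..1}. d0 M scal d (scal (of_real s) z) 0 \<le> B"
  using d0_scal_le[of "of_real s" z 0 for s] by (intro exI[of _ "C1 * d z 0 + C2 + C3"]) (simp add: module)

lemma asym_d0_tendsto:
  "((\<lambda>t. d0 M scal d (scal (of_real t) x) (scal (of_real t) y) / t) \<longlongrightarrow> asym scal (d0 M scal d) x y) at_top"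
  by (rule asym_tendsto[OF module d0_nonneg d0_triangle d0_translation_invariant d0_scal_of_real_bounded])

lemma d0_unit_invariant:
  assumes "v \<in> unit_group"
  shows "d0 M scal d (scal v x) (scal v y) = d0 M scal d x y"
  unfolding d0_def scal_scal[OF module]
  by (rule haar_integral_mult_right[OF haar assms borel_measurable_dist_scal])

lemma asym_d0_commute: "asym scal (d0 M scal d) x y = asym scal (d0 M scal d) y x"
  by (rule asym_commute) (rule d0_commute)

lemma asym_d0_triangle:
  "asym scal (d0 M scal d) x z \<le> asym scal (d0 M scal d) x y + asym scal (d0 M scal d) y z"
  by (rule asym_triangle) (rule d0_triangle, rule asym_d0_tendsto)

lemma asym_d0_scal: "asym scal (d0 M scal d) (scal c x) (scal c y) = norm c * asym scal (d0 M scal d) x y"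
  by (rule asym_scal) (rule module, erule d0_unit_invariant, rule asym_d0_tendsto)

end

theorem proposition2:
  fixes scal :: "'k::real_normed_div_algebra \<Rightarrow> 'e::ab_group_add \<Rightarrow> 'e"
    and d :: "'e \<Rightarrow> 'e \<Rightarrow> real"
    and M :: "'k measure"
    and C0 C1 C2 C3 :: real
  assumes "metric_vector_space scal d"
    and "translation_invariant_C C0 d"
    and "lipschitz_multiplicative C1 C2 C3 scal d"
    and "haar_prob_U M"
  shows "(\<forall>x y. asym scal d x y = asym scal d y x) \<and>
         (\<forall>x y z. asym scal d x z \<le> asym scal d x y + asym scal d y z) \<and>
         (\<forall>x y. asym scal (d0 M scal d) x y = asym scal (d0 M scal d) y x) \<and>
         (\<forall>x y z. asym scal (d0 M scal d) x z \<le> asym scal (d0 M scal d) x y + asym scal (d0 M scal d) y z) \<and>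
         (\<forall>c x y. asym scal (d0 M scal d) (scal c x) (scal c y) = norm c * asym scal (d0 M scal d) x y)"
proof -
  interpret haar_averaged_metric scal d C0 C1 C2 C3 M
    by unfold_locales (fact assms)+
  show ?thesis
    using asym_d_commute asym_d_triangle asym_d0_commute asym_d0_triangle asym_d0_scal by blast
qed

end
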